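(* Let $R$ be a reduced root system and let $W$ be its Weyl group. Let $(t_1,\ldots,t_n)$ be an $n$-tuple of reflections in $W$ with $t_1t_2\cdots t_n=1$. Then $n$ is even and $(t_1,\ldots,t_n)$ is braid-equivalent to an $n$-tuple $(t'_1,\ldots,t'_n)$ of reflections with $t'_1\cdots t'_n=1$ and $t'_{2i-1}=t'_{2i}$ for $i=1,\ldots,n/2$.
   Context: For a group $G$, an elementary transformation (braid move) of an $n$-tuple $(t_1,\ldots,t_n)\in G^n$ is, for some $1\leq i\leq n-1$, either the replacement of $(t_i,t_{i+1})$ by $(t_it_{i+1}t_i^{-1},t_i)$ or by $(t_{i+1},t_{i+1}^{-1}t_it_{i+1})$, leaving the other entries unchanged. Two $n$-tuples are braid-equivalent if one is obtained from the other by a finite sequence of elementary transformations. *)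

theory Defs
  imports "HOL-Analysis.Analysis" "HOL-Algebra.Group"
begin

definition refl :: "'a::real_inner \<Rightarrow> 'a \<Rightarrow> 'a" where
  "refl \<alpha> = (\<lambda>v. v - (2 * (v \<bullet> \<alpha>) / (\<alpha> \<bullet> \<alpha>)) *\<^sub>R \<alpha>)"

definition root_system :: "'a::euclidean_space set \<Rightarrow> bool" where
  "root_system R \<longleftrightarrow> finite R \<and> 0 \<notin> R \<and> span R = UNIV \<and>
     (\<forall>\<alpha>\<in>R. refl \<alpha> ` R = R) \<and>
     (\<forall>\<alpha>\<in>R. \<forall>\<beta>\<in>R. 2 * (\<beta> \<bullet> \<alpha>) / (\<alpha> \<bullet> \<alpha>) \<in> \<int>)"

definition reduced :: "'a::euclidean_space set \<Rightarrow> bool" where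
  "reduced R \<longleftrightarrow> (\<forall>\<alpha>\<in>R. \<forall>c::real. c *\<^sub>R \<alpha> \<in> R \<longrightarrow> c = 1 \<or> c = -1)"

inductive_set weyl_carrier :: "'a::euclidean_space set \<Rightarrow> ('a \<Rightarrow> 'a) set" for R where
  id: "id \<in> weyl_carrier R"
| step: "\<alpha> \<in> R \<Longrightarrow> w \<in> weyl_carrier R \<Longrightarrow> refl \<alpha> \<circ> w \<in> weyl_carrier R"

definition weyl_group :: "'a::euclidean_space set \<Rightarrow> ('a \<Rightarrow> 'a) monoid" where
  "weyl_group R = \<lparr>carrier = weyl_carrier R, monoid.mult = (\<circ>), one = id\<rparr>"

definition reflections :: "'a::euclidean_space set \<Rightarrow> ('a \<Rightarrow> 'a) set" where
  "reflections R = refl ` R"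

definition list_prod :: "('g, 'b) monoid_scheme \<Rightarrow> 'g list \<Rightarrow> 'g" where
  "list_prod G ts = foldr (\<lambda>x y. x \<otimes>\<^bsub>G\<^esub> y) ts \<one>\<^bsub>G\<^esub>"

inductive braid_step :: "('g, 'b) monoid_scheme \<Rightarrow> 'g list \<Rightarrow> 'g list \<Rightarrow> bool" for G where
  left: "braid_step G (xs @ [a, b] @ ys) (xs @ [a \<otimes>\<^bsub>G\<^esub> b \<otimes>\<^bsub>G\<^esub> inv\<^bsub>G\<^esub> a, a] @ ys)"
| right: "braid_step G (xs @ [a, b] @ ys) (xs @ [b, inv\<^bsub>G\<^esub> b \<otimes>\<^bsub>G\<^esub> a \<otimes>\<^bsub>G\<^esub> b] @ ys)"

definition braid_equiv :: "('g, 'b) monoid_scheme \<Rightarrow> 'g list \<Rightarrow> 'g list \<Rightarrow> bool" where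
  "braid_equiv G = (braid_step G)\<^sup>*\<^sup>*"

end

(* Fix v orthogonal to no root. For a tuple t_1, ..., t_n of reflections with product 1
   put p_j = t_(j+1) ... t_n v, so that p_0 = p_n = v, and consider the potential
   sum_j <p_j, v>. All p_j have the length of v and consecutive ones differ, so some
   interior p_j is a strict local minimum of <-, v>. If t_j and t_(j+1) differ there, a
   computation in the plane of their roots shows that one of the two braid moves at
   positions j, j+1 raises <p_j, v> and hence the potential. The braid class of the tuple
   is finite, so a member of maximal potential has two equal neighbours t, t; braid
   moves carry them to the front, and induction on n applies to the remaining tuple. *)

theory Submission
  imports Defs
begin

section \<open>Reflections in a real inner product space\<close>

lemma refl_refl [simp]: "refl a (refl a x) = x"
proof (cases "a = 0")
  case False
  then have "a \<bullet> a \<noteq> 0" by simp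
  then show ?thesis by (simp add: refl_def inner_diff_left algebra_simps)
qed (simp add: refl_def)

lemma refl_comp_refl [simp]: "refl a \<circ> refl a = id"
  by auto

lemma refl_inner_commute: "refl a x \<bullet> y = x \<bullet> refl a y"
  by (simp add: refl_def inner_diff_left inner_diff_right inner_commute algebra_simps)

lemma refl_inner_refl [simp]: "refl a x \<bullet> refl a y = x \<bullet> y"
  by (simp add: refl_inner_commute)

lemma linear_refl: "linear (refl a)"
  by (rule linearI) (simp_all add: refl_def inner_add_left algebra_simps add_divide_distrib)

lemma refl_scaleR: "c \<noteq> 0 \<Longrightarrow> refl (c *\<^sub>R a) = refl a"
  by (rule ext) (simp add: refl_def)

lemma refl_conj: "refl a \<circ> refl b \<circ> refl a = refl (refl a b)"
proof (rule ext)
  fix x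
  have "refl a (refl b (refl a x)) = x - (2 * (refl a x \<bullet> b) / (b \<bullet> b)) *\<^sub>R refl a b"
    using linear_refl[of a] by (simp add: refl_def[of b] linear_diff linear_scale)
  also have "\<dots> = refl (refl a b) x"
    by (simp add: refl_def[of "refl a b"] refl_inner_commute)
  finally show "(refl a \<circ> refl b \<circ> refl a) x = refl (refl a b) x" by simp
qed

lemma refl_neq_id: "a \<noteq> 0 \<Longrightarrow> refl a \<noteq> id"
proof
  assume "a \<noteq> 0" "refl a = id"
  then have "refl a a \<bullet> a = a \<bullet> a" by simp
  moreover have "refl a a \<bullet> a = - (a \<bullet> a)"
    using \<open>a \<noteq> 0\<close> by (simp add: refl_def inner_diff_left)
  ultimately show False using \<open>a \<noteq> 0\<close> by simp
qed

lemma inner_sq_less_if_refl_neq: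
  fixes a b :: "'a::real_inner"
  assumes "a \<noteq> 0" "b \<noteq> 0" "refl a \<noteq> refl b"
  shows "(a \<bullet> b)\<^sup>2 < (a \<bullet> a) * (b \<bullet> b)"
proof (rule ccontr)
  assume "\<not> ?thesis"
  then have eq: "(a \<bullet> b)\<^sup>2 = (a \<bullet> a) * (b \<bullet> b)"
    using Cauchy_Schwarz_ineq[of a b] by simp
  have aa: "a \<bullet> a > 0" using assms by simp
  define c where "c = (a \<bullet> b) / (a \<bullet> a)"
  have "(b - c *\<^sub>R a) \<bullet> (b - c *\<^sub>R a) = b \<bullet> b - (a \<bullet> b)\<^sup>2 / (a \<bullet> a)"
    using aa by (simp add: c_def inner_diff_left inner_diff_right inner_commute power2_eq_square field_simps)
  also have "\<dots> = 0" using eq aa by (simp add: field_simps)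
  finally have "b = c *\<^sub>R a" by simp
  with \<open>b \<noteq> 0\<close> have "refl b = refl a" by (auto simp: refl_scaleR)
  with assms show False by simp
qed

lemma four_le_mult_if_sum_le:
  fixes X Y s t :: real
  assumes "0 < X" "0 < Y" "X + Y \<le> s * Y" "X + Y \<le> t * X"
  shows "4 \<le> s * t"
proof -
  have "4 * (X * Y) \<le> (X + Y)\<^sup>2"
    using sum_squares_ge_zero[of "X - Y" 0] by (simp add: algebra_simps power2_eq_square)
  also have "\<dots> \<le> (s * Y) * (t * X)"
    unfolding power2_eq_square using assms by (intro mult_mono) auto
  also have "\<dots> = (s * t) * (X * Y)" by simp
  finally show ?thesis using assms by simp
qed

text \<open>Let X, Y > 0 be the increases of the inner product with v under the two reflections
  at b. The increases under the two products are X + Y - s Y and X + Y - t X, where s t is 4 times the squared cosine of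
  the angle between the roots, hence below 4; since 4 X Y \<le> (X + Y)^2, they cannot
  both be non-positive.\<close>

lemma inner_less_refl_refl:
  fixes \<alpha> \<beta> b v :: "'a::real_inner"
  assumes "\<alpha> \<noteq> 0" "\<beta> \<noteq> 0" "refl \<alpha> \<noteq> refl \<beta>"
    and "b \<bullet> v < refl \<alpha> b \<bullet> v" "b \<bullet> v < refl \<beta> b \<bullet> v"
  shows "b \<bullet> v < refl \<alpha> (refl \<beta> b) \<bullet> v \<or> b \<bullet> v < refl \<beta> (refl \<alpha> b) \<bullet> v"
proof (rule ccontr)
  assume fail: "\<not> ?thesis"
  define A where "A = 2 * (\<alpha> \<bullet> v) / (\<alpha> \<bullet> \<alpha>)"
  define B where "B = 2 * (\<beta> \<bullet> v) / (\<beta> \<bullet> \<beta>)"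
  define k where "k = 2 * (\<alpha> \<bullet> \<beta>) / (\<beta> \<bullet> \<beta>)"
  define l where "l = 2 * (\<alpha> \<bullet> \<beta>) / (\<alpha> \<bullet> \<alpha>)"
  define X where "X = refl \<alpha> b \<bullet> v - b \<bullet> v"
  define Y where "Y = refl \<beta> b \<bullet> v - b \<bullet> v"
  have X: "X = - (b \<bullet> \<alpha>) * A" and Y: "Y = - (b \<bullet> \<beta>) * B"
    by (simp_all add: X_def Y_def A_def B_def refl_def inner_diff_left)
  have "0 < X" "0 < Y" using assms by (simp_all add: X_def Y_def)
  then have "A \<noteq> 0" "B \<noteq> 0" using X Y by auto
  have refl_along: "refl \<gamma> x \<bullet> v = x \<bullet> v - (x \<bullet> \<gamma>) * (2 * (\<gamma> \<bullet> v) / (\<gamma> \<bullet> \<gamma>))"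
    for \<gamma> x by (simp add: refl_def inner_diff_left)
  have \<beta>\<alpha>: "refl \<beta> b \<bullet> \<alpha> = b \<bullet> \<alpha> - (b \<bullet> \<beta>) * k"
    by (simp add: refl_def k_def inner_diff_right inner_commute)
  have "refl \<alpha> (refl \<beta> b) \<bullet> v - b \<bullet> v = X + Y + (b \<bullet> \<beta>) * k * A"
    unfolding refl_along[of \<alpha>] \<beta>\<alpha> A_def[symmetric] X Y_def by (simp add: algebra_simps)
  also have "\<dots> = X + Y - (k * A / B) * Y"
    using \<open>B \<noteq> 0\<close> by (simp add: Y)
  finally have "refl \<alpha> (refl \<beta> b) \<bullet> v - b \<bullet> v = X + Y - (k * A / B) * Y" .
  with fail have 1: "X + Y \<le> (k * A / B) * Y" by simp
  have \<alpha>\<beta>: "refl \<alpha> b \<bullet> \<beta> = b \<bullet> \<beta> - (b \<bullet> \<alpha>) * l"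
    by (simp add: refl_def l_def inner_diff_right inner_commute)
  have "refl \<beta> (refl \<alpha> b) \<bullet> v - b \<bullet> v = X + Y + (b \<bullet> \<alpha>) * l * B"
    unfolding refl_along[of \<beta>] \<alpha>\<beta> B_def[symmetric] Y X_def by (simp add: algebra_simps)
  also have "\<dots> = X + Y - (l * B / A) * X"
    using \<open>A \<noteq> 0\<close> by (simp add: X)
  finally have "refl \<beta> (refl \<alpha> b) \<bullet> v - b \<bullet> v = X + Y - (l * B / A) * X" .
  with fail have 2: "X + Y \<le> (l * B / A) * X" by simp
  have "4 \<le> (k * A / B) * (l * B / A)"
    using four_le_mult_if_sum_le[OF \<open>0 < X\<close> \<open>0 < Y\<close> 1 2] .
  also have "\<dots> = 4 * (\<alpha> \<bullet> \<beta>)\<^sup>2 / ((\<alpha> \<bullet> \<alpha>) * (\<beta> \<bullet> \<beta>))"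
    using \<open>A \<noteq> 0\<close> \<open>B \<noteq> 0\<close> by (simp add: k_def l_def power2_eq_square)
  also have "\<dots> < 4"
    using inner_sq_less_if_refl_neq[OF assms(1-3)] assms(1,2) by (simp add: divide_less_eq)
  finally show False by simp
qed

lemma ex_inner_nonzero:
  fixes S :: "'a::real_inner set"
  assumes "finite S" "0 \<notin> S"
  shows "\<exists>v. \<forall>\<alpha>\<in>S. v \<bullet> \<alpha> \<noteq> 0"
  using assms
proof (induction S rule: finite_induct)
  case (insert \<alpha> S)
  then obtain v where v: "\<forall>\<beta>\<in>S. v \<bullet> \<beta> \<noteq> 0" "\<alpha> \<noteq> 0" by auto
  have "finite ((\<lambda>\<beta>. - (v \<bullet> \<beta>) / (\<alpha> \<bullet> \<beta>)) ` insert \<alpha> S)"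
    using insert.hyps(1) by simp
  then obtain e :: real where e: "e \<notin> (\<lambda>\<beta>. - (v \<bullet> \<beta>) / (\<alpha> \<bullet> \<beta>)) ` insert \<alpha> S"
    using ex_new_if_finite[OF infinite_UNIV_char_0] by blast
  have "(v + e *\<^sub>R \<alpha>) \<bullet> \<beta> \<noteq> 0" if "\<beta> \<in> insert \<alpha> S" for \<beta>
  proof (cases "\<alpha> \<bullet> \<beta> = 0")
    case True
    with v that have "\<beta> \<in> S" by auto
    with True v show ?thesis by (simp add: inner_add_left)
  next
    case False
    show ?thesis
    proof
      assume "(v + e *\<^sub>R \<alpha>) \<bullet> \<beta> = 0"
      with False have "e = - (v \<bullet> \<beta>) / (\<alpha> \<bullet> \<beta>)" by (simp add: inner_add_left field_simps)
      with e that show False by blast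
    qed
  qed
  then show ?case by blast
qed simp

section \<open>Root systems and their Weyl groups\<close>

lemma root_system_nonzero: "root_system R \<Longrightarrow> \<alpha> \<in> R \<Longrightarrow> \<alpha> \<noteq> 0"
  unfolding root_system_def by blast

lemma root_system_refl_closed: "root_system R \<Longrightarrow> \<alpha> \<in> R \<Longrightarrow> \<beta> \<in> R \<Longrightarrow> refl \<alpha> \<beta> \<in> R"
  unfolding root_system_def by blast

lemma reflection_involutive: "t \<in> reflections R \<Longrightarrow> t (t x) = x"
  by (auto simp: reflections_def)

lemma reflection_conj_reflection:
  assumes "root_system R" "s \<in> reflections R" "t \<in> reflections R"
  shows "s \<circ> t \<circ> s \<in> reflections R"
proof -
  obtain \<alpha> \<beta> where "\<alpha> \<in> R" "s = refl \<alpha>" "\<beta> \<in> R" "t = refl \<beta>"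
    using assms(2,3) by (auto simp: reflections_def)
  moreover have "refl \<alpha> \<beta> \<in> R" using root_system_refl_closed assms(1) calculation by blast
  ultimately show ?thesis by (auto simp: reflections_def refl_conj)
qed

lemma inner_foldr_reflections:
  "set ts \<subseteq> reflections R \<Longrightarrow> foldr (\<circ>) ts id x \<bullet> foldr (\<circ>) ts id y = x \<bullet> y"
  by (induction ts) (auto simp: reflections_def)

lemma foldr_reflections_regular:
  assumes "root_system R" "set ts \<subseteq> reflections R" "\<forall>\<alpha>\<in>R. v \<bullet> \<alpha> \<noteq> 0" "\<alpha> \<in> R"
  shows "foldr (\<circ>) ts id v \<bullet> \<alpha> \<noteq> 0"
  using assms(2,4)
proof (induction ts arbitrary: \<alpha>)
  case Nil
  then show ?case using assms(3) by simp
next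
  case (Cons t ts)
  then obtain \<beta> where "\<beta> \<in> R" "t = refl \<beta>" by (auto simp: reflections_def)
  moreover have "refl \<beta> \<alpha> \<in> R" using root_system_refl_closed assms(1) Cons.prems calculation by blast
  ultimately show ?case using Cons by (simp add: refl_inner_commute)
qed

lemma refl_in_weyl_carrier: "\<alpha> \<in> R \<Longrightarrow> refl \<alpha> \<in> weyl_carrier R"
  using weyl_carrier.step[OF _ weyl_carrier.id] by simp

lemma comp_in_weyl_carrier:
  "w \<in> weyl_carrier R \<Longrightarrow> w' \<in> weyl_carrier R \<Longrightarrow> w \<circ> w' \<in> weyl_carrier R"
  by (induction rule: weyl_carrier.induct) (auto simp: comp_assoc intro: weyl_carrier.step)

lemma monoid_weyl_group: "monoid (weyl_group R)"
  by (rule monoidI) (auto simp: weyl_group_def comp_in_weyl_carrier intro: weyl_carrier.id)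

lemma inv_weyl_group_reflection:
  assumes "t \<in> reflections R"
  shows "inv\<^bsub>weyl_group R\<^esub> t = t"
proof -
  interpret monoid "weyl_group R" by (rule monoid_weyl_group)
  obtain \<alpha> where "\<alpha> \<in> R" "t = refl \<alpha>" using assms by (auto simp: reflections_def)
  then show ?thesis
    by (intro inv_unique'[symmetric]) (simp_all add: weyl_group_def refl_in_weyl_carrier)
qed

lemma mult_weyl_group: "x \<otimes>\<^bsub>weyl_group R\<^esub> y = x \<circ> y"
  by (simp add: weyl_group_def)

lemma list_prod_weyl_group: "list_prod (weyl_group R) ts = foldr (\<circ>) ts id"
  by (simp add: list_prod_def weyl_group_def)

section \<open>Braid moves on tuples of reflections\<close>

lemma braid_step_left_reflection:
  "s \<in> reflections R \<Longrightarrow>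
    braid_step (weyl_group R) (xs @ [s, t] @ ys) (xs @ [s \<circ> t \<circ> s, s] @ ys)"
  using braid_step.left[of "weyl_group R" xs s t ys]
  by (simp add: inv_weyl_group_reflection mult_weyl_group)

lemma braid_step_right_reflection:
  "t \<in> reflections R \<Longrightarrow>
    braid_step (weyl_group R) (xs @ [s, t] @ ys) (xs @ [t, t \<circ> s \<circ> t] @ ys)"
  using braid_step.right[of "weyl_group R" xs s t ys]
  by (simp add: inv_weyl_group_reflection mult_weyl_group)

lemma foldr_comp_append_pair:
  "foldr (\<circ>) (xs @ s # t # ys) id x = foldr (\<circ>) xs id (s (t (foldr (\<circ>) ys id x)))"
  by (induction xs) auto

lemma braid_step_reflections_invariants:
  assumes "root_system R" "braid_step (weyl_group R) xs ys" "set xs \<subseteq> reflections R"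
  shows "set ys \<subseteq> reflections R \<and> foldr (\<circ>) ys id = foldr (\<circ>) xs id \<and> length ys = length xs"
  using assms(2)
proof cases
  case (left pre s t suf)
  moreover have "s \<in> reflections R" "t \<in> reflections R" using assms(3) left by auto
  ultimately show ?thesis
    using assms(3) reflection_conj_reflection[OF assms(1)]
    by (simp add: fun_eq_iff foldr_comp_append_pair inv_weyl_group_reflection mult_weyl_group
        reflection_involutive del: foldr_append)
next
  case (right pre s t suf)
  moreover have "s \<in> reflections R" "t \<in> reflections R" using assms(3) right by auto
  ultimately show ?thesis
    using assms(3) reflection_conj_reflection[OF assms(1)]
    by (simp add: fun_eq_iff foldr_comp_append_pair inv_weyl_group_reflection mult_weyl_group
        reflection_involutive del: foldr_append)
qed

lemma braid_equiv_reflections_invariants: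
  assumes "root_system R" "braid_equiv (weyl_group R) xs ys" "set xs \<subseteq> reflections R"
  shows "set ys \<subseteq> reflections R \<and> foldr (\<circ>) ys id = foldr (\<circ>) xs id \<and> length ys = length xs"
  using assms(2) unfolding braid_equiv_def
proof (induction rule: rtranclp_induct)
  case (step ys zs)
  then show ?case using braid_step_reflections_invariants[OF assms(1), of ys zs] by metis
qed (use assms(3) in simp)

lemma braid_step_append_left: "braid_step G ys ys' \<Longrightarrow> braid_step G (xs @ ys) (xs @ ys')"
  by (induction rule: braid_step.induct)
    (metis append.assoc braid_step.left, metis append.assoc braid_step.right)

lemma braid_equiv_append_left: "braid_equiv G ys ys' \<Longrightarrow> braid_equiv G (xs @ ys) (xs @ ys')"
  unfolding braid_equiv_def
  by (induction rule: rtranclp_induct) (auto intro: rtranclp.rtrancl_into_rtrancl braid_step_append_left)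

text \<open>Two right braid moves with t carry the pair t, t past the entry in front of it.\<close>

lemma braid_equiv_pair_to_front:
  assumes "t \<in> reflections R"
  shows "braid_equiv (weyl_group R) (xs @ [t, t] @ ys) ([t, t] @ xs @ ys)"
proof (induction xs arbitrary: ys rule: rev_induct)
  case Nil
  then show ?case by (simp add: braid_equiv_def)
next
  case (snoc x xs)
  have "braid_step (weyl_group R) (xs @ [x, t] @ t # ys) (xs @ [t, t \<circ> x \<circ> t] @ t # ys)"
    by (rule braid_step_right_reflection[OF assms])
  moreover have "braid_step (weyl_group R) ((xs @ [t]) @ [t \<circ> x \<circ> t, t] @ ys)
      ((xs @ [t]) @ [t, t \<circ> (t \<circ> x \<circ> t) \<circ> t] @ ys)"
    by (rule braid_step_right_reflection[OF assms])
  moreover have "t \<circ> (t \<circ> x \<circ> t) \<circ> t = x"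
    using assms by (auto simp: fun_eq_iff reflection_involutive)
  ultimately have "braid_equiv (weyl_group R) ((xs @ [x]) @ [t, t] @ ys) (xs @ [t, t] @ x # ys)"
    unfolding braid_equiv_def by auto
  with snoc.IH[of "x # ys"] show ?case
    unfolding braid_equiv_def by auto
qed

section \<open>The potential of a tuple\<close>

lemma ex_interior_strict_local_min:
  fixes f :: "nat \<Rightarrow> 'b::linorder"
  assumes "2 \<le> n" "\<forall>j\<le>n. f j \<le> f 0" "f n = f 0" "\<forall>j<n. f j \<noteq> f (Suc j)"
  shows "\<exists>i. Suc i < n \<and> f (Suc i) < f i \<and> f (Suc i) < f (Suc (Suc i))"
proof -
  obtain m where m: "m \<in> {1..<n}" "f m = Min (f ` {1..<n})"
    using Min_in[of "f ` {1..<n}"] assms(1) by fastforce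
  then have min: "f m \<le> f j" if "j \<in> {1..<n}" for j using that by simp
  obtain i where i: "m = Suc i" using m(1) by (cases m) auto
  have "f m \<le> f i" using min[of i] assms(2) m(1) i by (cases i) auto
  moreover have "f m \<le> f (Suc m)"
  proof (cases "Suc m = n")
    case True
    then show ?thesis using assms(2,3) m(1) by auto
  qed (use min[of "Suc m"] m(1) in auto)
  moreover have "f i \<noteq> f m" "f m \<noteq> f (Suc m)" using assms(4) m(1) i by auto
  ultimately have "f (Suc i) < f i" "f (Suc i) < f (Suc (Suc i))" using i by auto
  moreover have "Suc i < n" using m(1) i by simp
  ultimately show ?thesis by blast
qed

definition suffix_point :: "'a \<Rightarrow> ('a \<Rightarrow> 'a) list \<Rightarrow> nat \<Rightarrow> 'a" where
  "suffix_point v ts j = foldr (\<circ>) (drop j ts) id v"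

definition potential :: "'a::real_inner \<Rightarrow> ('a \<Rightarrow> 'a) list \<Rightarrow> real" where
  "potential v ts = (\<Sum>j<length ts. suffix_point v ts j \<bullet> v)"

lemma suffix_point_nth: "j < length ts \<Longrightarrow> suffix_point v ts j = (ts ! j) (suffix_point v ts (Suc j))"
  by (simp add: suffix_point_def Cons_nth_drop_Suc[symmetric])

lemma suffix_point_0 [simp]: "suffix_point v ts 0 = foldr (\<circ>) ts id v"
  by (simp add: suffix_point_def)

lemma suffix_point_length [simp]: "suffix_point v ts (length ts) = v"
  by (simp add: suffix_point_def)

lemma suffix_point_replace_pair:
  assumes "x' \<circ> y' = x \<circ> y" "j \<noteq> Suc (length xs)"
  shows "suffix_point v (xs @ [x', y'] @ ys) j = suffix_point v (xs @ [x, y] @ ys) j"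
proof (cases "j \<le> length xs")
  case True
  have "x' (y' z) = x (y z)" for z using fun_cong[OF assms(1)] by simp
  with True show ?thesis by (simp add: suffix_point_def foldr_comp_append_pair del: foldr_append)
next
  case False
  with assms(2) obtain k where "j = length xs + 2 + k" by (intro that[of "j - length xs - 2"]) simp
  then show ?thesis by (simp add: suffix_point_def)
qed

lemma potential_replace_pair:
  assumes "x' \<circ> y' = x \<circ> y"
  shows "potential v (xs @ [x', y'] @ ys) - y' (foldr (\<circ>) ys id v) \<bullet> v
    = potential v (xs @ [x, y] @ ys) - y (foldr (\<circ>) ys id v) \<bullet> v"
proof -
  let ?i = "Suc (length xs)" and ?J = "{..<length xs + 2 + length ys} - {Suc (length xs)}"
  have len: "length (xs @ [z, z'] @ ys) = length xs + 2 + length ys" for z z' :: "'a \<Rightarrow> 'a"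
    by simp
  have split: "potential v (xs @ [z, z'] @ ys)
      = z' (foldr (\<circ>) ys id v) \<bullet> v + (\<Sum>j\<in>?J. suffix_point v (xs @ [z, z'] @ ys) j \<bullet> v)" for z z'
  proof -
    have "potential v (xs @ [z, z'] @ ys)
        = suffix_point v (xs @ [z, z'] @ ys) ?i \<bullet> v + (\<Sum>j\<in>?J. suffix_point v (xs @ [z, z'] @ ys) j \<bullet> v)"
      unfolding potential_def len by (rule sum.remove) auto
    moreover have "suffix_point v (xs @ [z, z'] @ ys) ?i = z' (foldr (\<circ>) ys id v)"
      by (simp add: suffix_point_def)
    ultimately show ?thesis by simp
  qed
  have "(\<Sum>j\<in>?J. suffix_point v (xs @ [x', y'] @ ys) j \<bullet> v)
      = (\<Sum>j\<in>?J. suffix_point v (xs @ [x, y] @ ys) j \<bullet> v)"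
    using suffix_point_replace_pair[OF assms] by (intro sum.cong) auto
  then show ?thesis unfolding split by simp
qed

lemma ex_strict_local_min_suffix_point:
  assumes rs: "root_system R" and reg: "\<forall>\<alpha>\<in>R. v \<bullet> \<alpha> \<noteq> 0"
    and ts: "set ts \<subseteq> reflections R" "foldr (\<circ>) ts id = id" "2 \<le> length ts"
  shows "\<exists>i. Suc i < length ts \<and>
    suffix_point v ts (Suc i) \<bullet> v < suffix_point v ts i \<bullet> v \<and>
    suffix_point v ts (Suc i) \<bullet> v < suffix_point v ts (Suc (Suc i)) \<bullet> v"
proof -
  define F where "F j = suffix_point v ts j \<bullet> v" for j
  have suffix: "set (drop j ts) \<subseteq> reflections R" for j
    using ts(1) set_drop_subset order_trans by metis
  have "F j \<le> F 0" for j
  proof -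
    have "suffix_point v ts j \<bullet> suffix_point v ts j = v \<bullet> v"
      using inner_foldr_reflections[OF suffix] by (simp add: suffix_point_def)
    then have "norm (suffix_point v ts j) = norm v" by (simp add: norm_eq_sqrt_inner)
    then have "norm (suffix_point v ts j) * norm v = F 0"
      using ts(2) by (simp add: F_def power2_norm_eq_inner flip: power2_eq_square)
    with norm_cauchy_schwarz show ?thesis unfolding F_def by metis
  qed
  moreover have "F j \<noteq> F (Suc j)" if "j < length ts" for j
  proof -
    have "ts ! j \<in> reflections R" using ts(1) that nth_mem by blast
    then obtain \<alpha> where "\<alpha> \<in> R" "ts ! j = refl \<alpha>" by (auto simp: reflections_def)
    moreover define p where "p = suffix_point v ts (Suc j)"
    ultimately have "F j = F (Suc j) - (p \<bullet> \<alpha>) * (2 * (\<alpha> \<bullet> v) / (\<alpha> \<bullet> \<alpha>))"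
      using suffix_point_nth[OF that] by (simp add: F_def p_def refl_def inner_diff_left)
    moreover have "p \<bullet> \<alpha> \<noteq> 0"
      using foldr_reflections_regular[OF rs suffix reg \<open>\<alpha> \<in> R\<close>] by (simp add: p_def suffix_point_def)
    moreover have "\<alpha> \<bullet> v \<noteq> 0" using reg \<open>\<alpha> \<in> R\<close> by (simp add: inner_commute)
    moreover have "\<alpha> \<noteq> 0" using root_system_nonzero[OF rs \<open>\<alpha> \<in> R\<close>] .
    ultimately show ?thesis by simp
  qed
  moreover have "F (length ts) = F 0" using ts(2) by (simp add: F_def)
  ultimately obtain i where "Suc i < length ts" "F (Suc i) < F i" "F (Suc i) < F (Suc (Suc i))"
    using ex_interior_strict_local_min[of "length ts" F] ts(3) by blast
  then show ?thesis unfolding F_def by blast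
qed

lemma braid_step_increasing_potential:
  assumes rs: "root_system R" and reg: "\<forall>\<alpha>\<in>R. v \<bullet> \<alpha> \<noteq> 0"
    and ts: "set ts \<subseteq> reflections R" "foldr (\<circ>) ts id = id" "2 \<le> length ts"
    and no_pair: "\<forall>i. Suc i < length ts \<longrightarrow> ts ! i \<noteq> ts ! Suc i"
  shows "\<exists>ts'. braid_step (weyl_group R) ts ts' \<and> potential v ts < potential v ts'"
proof -
  obtain i where i: "Suc i < length ts"
    and min: "suffix_point v ts (Suc i) \<bullet> v < suffix_point v ts i \<bullet> v"
      "suffix_point v ts (Suc i) \<bullet> v < suffix_point v ts (Suc (Suc i)) \<bullet> v"
    using ex_strict_local_min_suffix_point[OF rs reg ts] by blast
  define s t where "s = ts ! i" and "t = ts ! Suc i"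
  define xs ys where "xs = take i ts" and "ys = drop (Suc (Suc i)) ts"
  define b where "b = suffix_point v ts (Suc i)"
  have ts_eq: "ts = xs @ [s, t] @ ys"
    using i by (simp add: xs_def ys_def s_def t_def Cons_nth_drop_Suc)
  have st: "s \<in> reflections R" "t \<in> reflections R"
    using ts(1) i nth_mem[of i ts] nth_mem[of "Suc i" ts] by (auto simp: s_def t_def)
  then obtain \<alpha> \<beta> where \<alpha>\<beta>: "\<alpha> \<in> R" "s = refl \<alpha>" "\<beta> \<in> R" "t = refl \<beta>"
    by (auto simp: reflections_def)
  have b: "b = t (foldr (\<circ>) ys id v)"
    using suffix_point_nth[of "Suc i" ts v] i by (simp add: b_def t_def ys_def suffix_point_def)
  then have ys_v: "foldr (\<circ>) ys id v = t b" using reflection_involutive[OF st(2)] by simp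
  have "suffix_point v ts i = s b" using suffix_point_nth[of i ts v] i by (simp add: b_def s_def)
  moreover have "suffix_point v ts (Suc (Suc i)) = t b" using ys_v by (simp add: ys_def suffix_point_def)
  ultimately have "b \<bullet> v < refl \<alpha> b \<bullet> v" "b \<bullet> v < refl \<beta> b \<bullet> v"
    using min \<alpha>\<beta> by (simp_all add: b_def)
  moreover have "\<alpha> \<noteq> 0" "\<beta> \<noteq> 0" using \<alpha>\<beta> root_system_nonzero[OF rs] by auto
  moreover have "s \<noteq> t" using no_pair i by (simp add: s_def t_def)
  then have "refl \<alpha> \<noteq> refl \<beta>" using \<alpha>\<beta> by simp
  ultimately have "b \<bullet> v < refl \<alpha> (refl \<beta> b) \<bullet> v \<or> b \<bullet> v < refl \<beta> (refl \<alpha> b) \<bullet> v"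
    by (intro inner_less_refl_refl)
  then have "b \<bullet> v < s (t b) \<bullet> v \<or> b \<bullet> v < t (s b) \<bullet> v" using \<alpha>\<beta> by simp
  then show ?thesis
  proof
    assume up: "b \<bullet> v < s (t b) \<bullet> v"
    have "(s \<circ> t \<circ> s) \<circ> s = s \<circ> t" using st by (auto simp: fun_eq_iff reflection_involutive)
    from potential_replace_pair[OF this, of v xs ys]
    have "potential v (xs @ [s \<circ> t \<circ> s, s] @ ys) = potential v ts - b \<bullet> v + s (t b) \<bullet> v"
      unfolding ys_v ts_eq using reflection_involutive[OF st(2)] by simp
    moreover have "braid_step (weyl_group R) ts (xs @ [s \<circ> t \<circ> s, s] @ ys)"
      unfolding ts_eq by (rule braid_step_left_reflection[OF st(1)])
    ultimately show ?thesis using up by auto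
  next
    assume up: "b \<bullet> v < t (s b) \<bullet> v"
    have "t \<circ> (t \<circ> s \<circ> t) = s \<circ> t" using st by (auto simp: fun_eq_iff reflection_involutive)
    from potential_replace_pair[OF this, of v xs ys]
    have "potential v (xs @ [t, t \<circ> s \<circ> t] @ ys) = potential v ts - b \<bullet> v + t (s b) \<bullet> v"
      unfolding ys_v ts_eq using reflection_involutive[OF st(2)] by simp
    moreover have "braid_step (weyl_group R) ts (xs @ [t, t \<circ> s \<circ> t] @ ys)"
      unfolding ts_eq by (rule braid_step_right_reflection[OF st(2)])
    ultimately show ?thesis using up by auto
  qed
qed

lemma ex_braid_equiv_adjacent_equal:
  assumes rs: "root_system R" and reg: "\<forall>\<alpha>\<in>R. v \<bullet> \<alpha> \<noteq> 0"
    and ts: "set ts \<subseteq> reflections R" "foldr (\<circ>) ts id = id" "ts \<noteq> []"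
  shows "\<exists>ts' i. braid_equiv (weyl_group R) ts ts' \<and> Suc i < length ts' \<and> ts' ! i = ts' ! Suc i"
proof -
  define C where "C = {ts'. braid_equiv (weyl_group R) ts ts'}"
  have C_inv: "set ts' \<subseteq> reflections R \<and> foldr (\<circ>) ts' id = id \<and> length ts' = length ts"
    if "ts' \<in> C" for ts'
    using braid_equiv_reflections_invariants[OF rs _ ts(1)] that ts(2) by (simp add: C_def)
  have "finite (reflections R)" using rs by (simp add: root_system_def reflections_def)
  then have "finite C"
    using C_inv by (intro finite_subset[OF _ finite_lists_length_eq]) auto
  moreover have "ts \<in> C" by (simp add: C_def braid_equiv_def)
  ultimately have "Max (potential v ` C) \<in> potential v ` C" by (intro Max_in) auto
  then obtain m where m: "m \<in> C" "potential v m = Max (potential v ` C)" by auto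
  have m_max: "potential v ts' \<le> potential v m" if "ts' \<in> C" for ts'
    using \<open>finite C\<close> that by (simp add: m(2))
  have "length m \<noteq> 1"
  proof
    assume "length m = 1"
    then obtain t where "m = [t]" by (cases m) auto
    with C_inv[OF m(1)] obtain \<alpha> where "\<alpha> \<in> R" "refl \<alpha> = id" by (auto simp: reflections_def)
    with root_system_nonzero[OF rs] refl_neq_id show False by blast
  qed
  with C_inv[OF m(1)] ts(3) have "2 \<le> length m" by (cases ts) (auto simp: Suc_le_eq)
  have "\<exists>i. Suc i < length m \<and> m ! i = m ! Suc i"
  proof (rule ccontr)
    assume "\<nexists>i. Suc i < length m \<and> m ! i = m ! Suc i"
    then obtain m' where "braid_step (weyl_group R) m m'" "potential v m < potential v m'"
      using braid_step_increasing_potential[OF rs reg _ _ \<open>2 \<le> length m\<close>] C_inv[OF m(1)] by blast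
    moreover from this(1) m(1) have "m' \<in> C"
      by (simp add: C_def braid_equiv_def rtranclp.rtrancl_into_rtrancl)
    ultimately show False using m_max by fastforce
  qed
  then show ?thesis using m(1) by (auto simp: C_def)
qed

lemma ex_braid_equiv_Cons_pair:
  assumes rs: "root_system R" and reg: "\<forall>\<alpha>\<in>R. v \<bullet> \<alpha> \<noteq> 0"
    and ts: "set ts \<subseteq> reflections R" "foldr (\<circ>) ts id = id" "ts \<noteq> []"
  shows "\<exists>t zs. t \<in> reflections R \<and> braid_equiv (weyl_group R) ts (t # t # zs)"
proof -
  obtain us i where us: "braid_equiv (weyl_group R) ts us" "Suc i < length us" "us ! i = us ! Suc i"
    using ex_braid_equiv_adjacent_equal[OF rs reg ts] by blast
  define t xs ys where "t = us ! i" and "xs = take i us" and "ys = drop (Suc (Suc i)) us"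
  have "us = take i us @ [us ! i, us ! Suc i] @ drop (Suc (Suc i)) us"
    using us(2) by (simp add: Cons_nth_drop_Suc)
  then have us_eq: "us = xs @ [t, t] @ ys" unfolding t_def xs_def ys_def by (metis us(3))
  have t: "t \<in> reflections R"
    using braid_equiv_reflections_invariants[OF rs us(1) ts(1)] us(2) nth_mem by (auto simp: t_def)
  have "braid_equiv (weyl_group R) us ([t, t] @ xs @ ys)"
    unfolding us_eq by (rule braid_equiv_pair_to_front[OF t])
  with us(1) have "braid_equiv (weyl_group R) ts (t # t # xs @ ys)"
    unfolding braid_equiv_def by simp
  with t show ?thesis by blast
qed

lemma braid_equiv_paired:
  assumes rs: "root_system R" and reg: "\<forall>\<alpha>\<in>R. v \<bullet> \<alpha> \<noteq> 0"
  shows "set ts \<subseteq> reflections R \<Longrightarrow> foldr (\<circ>) ts id = id \<Longrightarrow> even (length ts) \<and>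
    (\<exists>ts'. braid_equiv (weyl_group R) ts ts' \<and> length ts' = length ts \<and>
       set ts' \<subseteq> reflections R \<and> foldr (\<circ>) ts' id = id \<and>
       (\<forall>i < length ts div 2. ts' ! (2 * i) = ts' ! (2 * i + 1)))"
proof (induction "length ts" arbitrary: ts rule: less_induct)
  case less
  show ?case
  proof (cases "ts = []")
    case True
    then show ?thesis by (auto simp: braid_equiv_def)
  next
    case False
    then obtain t zs where t: "t \<in> reflections R"
      and ts_zs: "braid_equiv (weyl_group R) ts (t # t # zs)"
      using ex_braid_equiv_Cons_pair[OF rs reg less.prems] by blast
    with braid_equiv_reflections_invariants[OF rs ts_zs less.prems(1)] less.prems(2)
    have zs: "set zs \<subseteq> reflections R" "foldr (\<circ>) zs id = id" "length ts = length zs + 2"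
      by (auto simp: fun_eq_iff reflection_involutive)
    then obtain zs' where "even (length zs)" and zs': "braid_equiv (weyl_group R) zs zs'"
      "length zs' = length zs" "set zs' \<subseteq> reflections R" "foldr (\<circ>) zs' id = id"
      "\<forall>i < length zs div 2. zs' ! (2 * i) = zs' ! (2 * i + 1)"
      using less.hyps[of zs] by auto
    have "braid_equiv (weyl_group R) ts (t # t # zs')"
      using ts_zs braid_equiv_append_left[OF zs'(1), of "[t, t]"]
      unfolding braid_equiv_def by simp
    moreover have "\<forall>i < length ts div 2. (t # t # zs') ! (2 * i) = (t # t # zs') ! (2 * i + 1)"
      using zs(3) zs'(5) by (auto simp: less_Suc_eq_0_disj)
    ultimately show ?thesis
      using \<open>even (length zs)\<close> zs zs' t
      by (intro conjI exI[of _ "t # t # zs'"]) (simp_all add: fun_eq_iff reflection_involutive)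
  qed
qed

theorem proposition2p3:
  fixes R :: "'a::euclidean_space set" and ts :: "('a \<Rightarrow> 'a) list"
  assumes "root_system R" and "reduced R"
    and "set ts \<subseteq> reflections R"
    and "list_prod (weyl_group R) ts = \<one>\<^bsub>weyl_group R\<^esub>"
  shows "even (length ts) \<and>
    (\<exists>ts'. braid_equiv (weyl_group R) ts ts' \<and> length ts' = length ts \<and>
       set ts' \<subseteq> reflections R \<and>
       list_prod (weyl_group R) ts' = \<one>\<^bsub>weyl_group R\<^esub> \<and>
       (\<forall>i < length ts div 2. ts' ! (2 * i) = ts' ! (2 * i + 1)))"
proof -
  have "finite R" "0 \<notin> R" using assms(1) by (auto simp: root_system_def)
  then obtain v :: 'a where reg: "\<forall>\<alpha>\<in>R. v \<bullet> \<alpha> \<noteq> 0" using ex_inner_nonzero by blast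
  have one: "\<one>\<^bsub>weyl_group R\<^esub> = id" by (simp add: weyl_group_def)
  show ?thesis
    using braid_equiv_paired[OF assms(1) reg assms(3)] assms(4)
    unfolding list_prod_weyl_group one by blast
qed

end
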